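(* For every $\gamma>0$ and every dislocation measure $\nu$, there exists a family $(q_n,n\geq1)$ of probability distributions, $q_n$ on $\mathcal{P}_n$, with $q_n((n))<1$ for every $n\geq1$, such that $n^\gamma(1-s_1)\overline{q}_n(\mathrm{d}\mathbf{s})\to(1-s_1)\nu(\mathrm{d}\mathbf{s})$ weakly as finite non-negative measures on $\mathcal{S}^{\downarrow}$ as $n\to\infty$.
   Context: $\mathcal{P}_n$ is the set of partitions of the integer $n$ (non-increasing sequences $\lambda$ of positive integers with sum $n$), and $\mathcal{P}_1=\{(1),\emptyset\}$. $\mathcal{S}^{\downarrow}=\{\mathbf{s}=(s_1,s_2,\dots):s_1\geq s_2\geq\dots\geq0,\sum s_i\leq1\}$ with the $\ell^1$ metric; $\overline{q}_n$ is the measure on $\mathcal{S}^{\downarrow}$ defined by $\overline{q}_n(f)=\sum_{\lambda\in\mathcal{P}_n}q_n(\lambda)f(\lambda/n)$. A dislocation measure is a $\sigma$-finite measure $\nu$ on $\mathcal{S}^{\downarrow}$ with $\nu(\{(1,0,\dots)\})=0$, $\nu(\sum_i s_i<1)=0$ and $\int(1-s_1)\nu(\mathrm{d}\mathbf{s})<\infty$. *)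

theory Defs
  imports "HOL-Probability.Probability"
begin

text \<open>Elements of S-down are sequences indexed from 0: s 0 is the paper's s_1.\<close>

definition Sdown :: "(nat \<Rightarrow> real) set" where
  "Sdown = {s. antimono s \<and> (\<forall>i. 0 \<le> s i) \<and> summable s \<and> suminf s \<le> 1}"

definition l1dist :: "(nat \<Rightarrow> real) \<Rightarrow> (nat \<Rightarrow> real) \<Rightarrow> real" where
  "l1dist s t = (\<Sum>i. \<bar>s i - t i\<bar>)"

definition l1open :: "(nat \<Rightarrow> real) set \<Rightarrow> bool" where
  "l1open U \<longleftrightarrow> U \<subseteq> Sdown \<and>
     (\<forall>s\<in>U. \<exists>e>0. \<forall>t\<in>Sdown. l1dist s t < e \<longrightarrow> t \<in> U)"

definition Sdown_borel :: "(nat \<Rightarrow> real) measure" where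
  "Sdown_borel = sigma Sdown {U. l1open U}"

definition dislocation_measure :: "(nat \<Rightarrow> real) measure \<Rightarrow> bool" where
  "dislocation_measure \<nu> \<longleftrightarrow>
     sets \<nu> = sets Sdown_borel \<and>
     sigma_finite_measure \<nu> \<and>
     emeasure \<nu> {(\<lambda>i. if i = 0 then 1 else 0)} = 0 \<and>
     emeasure \<nu> {s \<in> Sdown. suminf s < 1} = 0 \<and>
     (\<integral>\<^sup>+ s. ennreal (1 - s 0) \<partial>\<nu>) < \<infinity>"

text \<open>Partitions of n as non-increasing lists of positive integers with sum n;
  by convention P_1 also contains the empty partition.\<close>
definition partitions :: "nat \<Rightarrow> nat list set" where
  "partitions n = {l. sorted_wrt (\<ge>) l \<and> (\<forall>x\<in>set l. 0 < x) \<and> sum_list l = n}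
                  \<union> (if n = 1 then {[]} else {})"

definition scaled :: "nat \<Rightarrow> nat list \<Rightarrow> nat \<Rightarrow> real" where
  "scaled n l = (\<lambda>i. if i < length l then real (l ! i) / real n else 0)"

definition qbar :: "nat \<Rightarrow> nat list pmf \<Rightarrow> ((nat \<Rightarrow> real) \<Rightarrow> real) \<Rightarrow> real" where
  "qbar n q f = (\<Sum>l\<in>partitions n. pmf q l * f (scaled n l))"

definition bounded_Sdown :: "((nat \<Rightarrow> real) \<Rightarrow> real) \<Rightarrow> bool" where
  "bounded_Sdown f \<longleftrightarrow> (\<exists>B. \<forall>s\<in>Sdown. \<bar>f s\<bar> \<le> B)"

definition l1_continuous_Sdown :: "((nat \<Rightarrow> real) \<Rightarrow> real) \<Rightarrow> bool" where
  "l1_continuous_Sdown f \<longleftrightarrow>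
     (\<forall>s\<in>Sdown. \<forall>e>0. \<exists>d>0. \<forall>t\<in>Sdown. l1dist s t < d \<longrightarrow> \<bar>f t - f s\<bar> < e)"

end

theory Submission
  imports Defs
begin

(*
  At level n, discretize s \<in> S\<down> by the partition of n whose parts are the positive
  \<lfloor>n s\<^sub>i\<rfloor>, completed by parts equal to 1; for s of total mass 1 its rescaling by 1/n
  converges to s in l1.  Take for q\<^sub>n the image of n powr -\<gamma> \<cdot> \<nu>, restricted to
  {1 - s\<^sub>1 \<ge> \<epsilon>\<^sub>n}, under this discretization, plus the weight 1/(2 n \<cdot> n powr \<gamma>) on the
  partition into singletons; the remaining mass sits on (n), which the test functions
  (1 - s\<^sub>1) f do not see.  The threshold \<epsilon>\<^sub>n = 1/n + 2 (C + 1) n powr -\<gamma>, with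
  C = \<integral> (1 - s\<^sub>1) d\<nu>, tends to 0; by Markov's inequality it keeps the mass of the first
  part below 1/2, and its term 1/n ensures that 1 - s\<^sub>1 at most doubles under
  discretization, which gives the dominating function for dominated convergence.
*)

lemma measurable_map_upt:
  fixes g :: "nat \<Rightarrow> 'a \<Rightarrow> 'b::countable"
  assumes g: "\<And>i. g i \<in> measurable M (count_space UNIV)"
  shows "(\<lambda>x. map (\<lambda>i. g i x) [0..<k]) \<in> measurable M (count_space UNIV)"
proof (induction k)
  case (Suc k)
  have "(\<lambda>x. (\<lambda>xs x. xs @ [g k x]) (map (\<lambda>i. g i x) [0..<k]) x)
      \<in> measurable M (count_space UNIV)"
  proof (rule measurable_compose_countable[OF _ Suc.IH])
    fix xs :: "'b list"
    show "(\<lambda>x. xs @ [g k x]) \<in> measurable M (count_space UNIV)"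
      using measurable_comp[OF g measurable_count_space[of "\<lambda>y. xs @ [y]" UNIV]]
      by (simp add: comp_def)
  qed
  then show ?case by simp
qed simp

lemma integral_indicator_finite_range:
  fixes p :: "'a \<Rightarrow> 'b" and h :: "'b \<Rightarrow> real"
  assumes p: "p \<in> measurable M (count_space UNIV)" and P: "finite P"
    and range: "\<And>x. x \<in> space M \<Longrightarrow> p x \<in> P"
    and A: "A \<in> sets M" "emeasure M A < \<infinity>"
  shows "(\<integral>x. indicator A x * h (p x) \<partial>M) = (\<Sum>l\<in>P. measure M {x \<in> A. p x = l} * h l)"
proof -
  have sets: "{x \<in> A. p x = l} \<in> sets M" for l
  proof -
    have "{x \<in> A. p x = l} = A \<inter> (p -` {l} \<inter> space M)"
      using sets.sets_into_space[OF A(1)] by auto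
    then show ?thesis using measurable_sets[OF p, of "{l}"] A(1) by auto
  qed
  have finite: "emeasure M {x \<in> A. p x = l} < \<infinity>" for l
    by (rule le_less_trans[OF emeasure_mono A(2)]) (auto simp: A(1))
  have "(\<integral>x. indicator A x * h (p x) \<partial>M) =
        (\<integral>x. (\<Sum>l\<in>P. indicator {x \<in> A. p x = l} x * h l) \<partial>M)"
  proof (rule Bochner_Integration.integral_cong[OF refl])
    fix x assume "x \<in> space M"
    have "(\<Sum>l\<in>P. indicator {x \<in> A. p x = l} x * h l) =
          (\<Sum>l\<in>P. if l = p x then indicator A x * h l else 0)"
      by (intro sum.cong) (auto split: split_indicator)
    also have "\<dots> = indicator A x * h (p x)"
      using range[OF \<open>x \<in> space M\<close>] P by (simp add: sum.delta')
    finally show "indicator A x * h (p x) = (\<Sum>l\<in>P. indicator {x \<in> A. p x = l} x * h l)" ..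
  qed
  also have "\<dots> = (\<Sum>l\<in>P. measure M {x \<in> A. p x = l} * h l)"
    using sets finite by (subst Bochner_Integration.integral_sum) auto
  finally show ?thesis .
qed

section \<open>The space S\<down>\<close>

lemma SdownD:
  assumes "s \<in> Sdown"
  shows "antimono s" "0 \<le> s i" "summable s" "suminf s \<le> 1"
  using assms by (auto simp: Sdown_def)

lemma Sdown_le_suminf: "s \<in> Sdown \<Longrightarrow> s i \<le> suminf s"
  using sum_le_suminf[of s "{i}"] by (auto simp: Sdown_def)

lemma Sdown_le_1: "s \<in> Sdown \<Longrightarrow> s i \<le> 1"
  using Sdown_le_suminf[of s i] SdownD(4)[of s] by linarith

lemma Suc_mult_le_1_Sdown:
  assumes "s \<in> Sdown"
  shows "real (Suc i) * s i \<le> 1"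
proof -
  have "real (Suc i) * s i = (\<Sum>j<Suc i. s i)" by simp
  also have "\<dots> \<le> (\<Sum>j<Suc i. s j)"
    using antimonoD[OF SdownD(1)[OF assms]] by (intro sum_mono) simp
  also have "\<dots> \<le> suminf s"
    using SdownD[OF assms] by (intro sum_le_suminf) auto
  finally show ?thesis using SdownD(4)[OF assms] by simp
qed

lemma summable_abs_diff_Sdown:
  assumes "s \<in> Sdown" "t \<in> Sdown"
  shows "summable (\<lambda>i. \<bar>s i - t i\<bar>)"
proof (rule summable_comparison_test)
  show "summable (\<lambda>i. s i + t i)"
    using assms by (intro summable_add) (auto simp: Sdown_def)
  show "\<exists>N. \<forall>i\<ge>N. norm \<bar>s i - t i\<bar> \<le> s i + t i"
    using SdownD(2)[OF assms(1)] SdownD(2)[OF assms(2)] by (auto simp: abs_if)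
qed

lemma l1dist_nonneg: "s \<in> Sdown \<Longrightarrow> t \<in> Sdown \<Longrightarrow> 0 \<le> l1dist s t"
  unfolding l1dist_def by (intro suminf_nonneg summable_abs_diff_Sdown) auto

lemma abs_diff_le_l1dist: "s \<in> Sdown \<Longrightarrow> t \<in> Sdown \<Longrightarrow> \<bar>s i - t i\<bar> \<le> l1dist s t"
  unfolding l1dist_def using sum_le_suminf[OF summable_abs_diff_Sdown, of s t "{i}"] by auto

lemma abs_suminf_diff_le_l1dist:
  assumes s: "s \<in> Sdown" and t: "t \<in> Sdown"
  shows "\<bar>suminf s - suminf t\<bar> \<le> l1dist s t"
proof -
  have "summable s" "summable t" using s t by (auto simp: Sdown_def)
  then have "suminf s - suminf t = (\<Sum>i. s i - t i)" by (simp add: suminf_diff)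
  also have "\<bar>\<dots>\<bar> \<le> (\<Sum>i. \<bar>s i - t i\<bar>)"
    by (rule summable_rabs[OF summable_abs_diff_Sdown[OF s t]])
  finally show ?thesis unfolding l1dist_def .
qed

lemma l1_continuous_coordinate: "l1_continuous_Sdown (\<lambda>s. s i)"
  unfolding l1_continuous_Sdown_def using abs_diff_le_l1dist[of _ _ i]
  by (metis abs_minus_commute le_less_trans)

lemma l1_continuous_suminf: "l1_continuous_Sdown suminf"
  unfolding l1_continuous_Sdown_def using abs_suminf_diff_le_l1dist
  by (metis abs_minus_commute le_less_trans)

lemma tendsto_l1_continuous:
  assumes f: "l1_continuous_Sdown f" and x: "x \<in> Sdown"
    and t: "eventually (\<lambda>n. t n \<in> Sdown) sequentially"
    and lim: "(\<lambda>n. l1dist x (t n)) \<longlonglongrightarrow> 0"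
  shows "(\<lambda>n. f (t n)) \<longlonglongrightarrow> f x"
proof (rule tendstoI)
  fix e :: real assume "0 < e"
  then obtain d where d: "d > 0" "\<forall>u\<in>Sdown. l1dist x u < d \<longrightarrow> \<bar>f u - f x\<bar> < e"
    using f x unfolding l1_continuous_Sdown_def by blast
  have "eventually (\<lambda>n. l1dist x (t n) < d) sequentially"
    using order_tendstoD(2)[OF lim d(1)] .
  with t show "eventually (\<lambda>n. dist (f (t n)) (f x) < e) sequentially"
    by eventually_elim (use d in \<open>auto simp: dist_real_def\<close>)
qed

lemma space_Sdown_borel[simp]: "space Sdown_borel = Sdown"
  unfolding Sdown_borel_def by (rule space_measure_of) (auto simp: l1open_def)

lemma l1open_in_sets: "l1open U \<Longrightarrow> U \<in> sets Sdown_borel"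
  unfolding Sdown_borel_def by (subst sets_measure_of) (auto simp: l1open_def)

lemma measurable_l1_continuous:
  assumes "l1_continuous_Sdown g"
  shows "g \<in> borel_measurable Sdown_borel"
proof (rule borel_measurableI)
  fix S :: "real set" assume "open S"
  have "l1open (g -` S \<inter> Sdown)"
    unfolding l1open_def
  proof safe
    fix s assume s: "s \<in> Sdown" "g s \<in> S"
    then obtain e where e: "e > 0" "\<forall>y. dist y (g s) < e \<longrightarrow> y \<in> S"
      using \<open>open S\<close> open_dist by metis
    obtain d where "d > 0" "\<forall>t\<in>Sdown. l1dist s t < d \<longrightarrow> \<bar>g t - g s\<bar> < e"
      using assms s(1) e(1) unfolding l1_continuous_Sdown_def by blast
    then show "\<exists>e>0. \<forall>t\<in>Sdown. l1dist s t < e \<longrightarrow> t \<in> g -` S \<inter> Sdown"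
      using e by (auto simp: dist_real_def)
  qed
  then show "g -` S \<inter> space Sdown_borel \<in> sets Sdown_borel"
    by (simp add: l1open_in_sets)
qed

lemma measurable_coordinate[measurable]: "(\<lambda>s. s i) \<in> borel_measurable Sdown_borel"
  by (rule measurable_l1_continuous[OF l1_continuous_coordinate])

lemma measurable_suminf_Sdown[measurable]: "(\<lambda>s. suminf s) \<in> borel_measurable Sdown_borel"
  using measurable_l1_continuous[OF l1_continuous_suminf] by simp

section \<open>Partitions and their discretization\<close>

lemma partitions_iff:
  "l \<in> partitions n \<longleftrightarrow>
     (sorted_wrt (\<ge>) l \<and> (\<forall>x\<in>set l. 0 < x) \<and> sum_list l = n) \<or> (n = 1 \<and> l = [])"
  unfolding partitions_def by auto

lemma single_in_partitions: "1 \<le> n \<Longrightarrow> [n] \<in> partitions n"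
  unfolding partitions_iff by auto

lemma length_le_sum_list: "\<forall>x\<in>set l. (0::nat) < x \<Longrightarrow> length l \<le> sum_list l"
  by (induction l) auto

lemma finite_partitions: "finite (partitions n)"
proof (rule finite_subset)
  show "partitions n \<subseteq> {l. set l \<subseteq> {0..n} \<and> length l \<le> n} \<union> {[]}"
    using member_le_sum_list length_le_sum_list by (fastforce simp: partitions_iff)
  show "finite ({l. set l \<subseteq> {0..n} \<and> length l \<le> n} \<union> {[]})"
    using finite_lists_length_le[of "{0..n}" n] by simp
qed

lemma scaled_in_Sdown:
  assumes "l \<in> partitions n" "1 \<le> n"
  shows "scaled n l \<in> Sdown"
proof -
  from assms(1) have sorted: "sorted_wrt (\<ge>) l" and sum: "sum_list l \<le> n"
    unfolding partitions_iff by auto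
  have "antimono (scaled n l)"
  proof (rule antimonoI)
    fix i j :: nat assume "i \<le> j"
    with sorted have "j < length l \<Longrightarrow> l ! j \<le> l ! i"
      by (cases "i = j") (auto simp: sorted_wrt_iff_nth_less)
    then show "scaled n l j \<le> scaled n l i"
      using \<open>i \<le> j\<close> by (auto simp: scaled_def divide_right_mono)
  qed
  moreover have zero: "scaled n l i = 0" if "i \<notin> {..<length l}" for i
    using that by (simp add: scaled_def)
  moreover have "suminf (scaled n l) = (\<Sum>i<length l. scaled n l i)"
    by (rule suminf_finite) (use zero in auto)
  moreover have "\<dots> = real (sum_list l) / real n"
    by (simp add: scaled_def sum_list_sum_nth atLeast0LessThan sum_divide_distrib)
  ultimately show ?thesis
    using sum assms(2) summable_finite[of "{..<length l}" "scaled n l"]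
    unfolding Sdown_def by (auto simp: scaled_def)
qed

definition floor_part :: "nat \<Rightarrow> (nat \<Rightarrow> real) \<Rightarrow> nat \<Rightarrow> nat" where
  "floor_part n s i = nat \<lfloor>real n * s i\<rfloor>"

definition num_floor_parts :: "nat \<Rightarrow> (nat \<Rightarrow> real) \<Rightarrow> nat" where
  "num_floor_parts n s = (LEAST i. floor_part n s i = 0)"

definition num_unit_parts :: "nat \<Rightarrow> (nat \<Rightarrow> real) \<Rightarrow> nat" where
  "num_unit_parts n s = n - (\<Sum>i<num_floor_parts n s. floor_part n s i)"

definition discretize :: "nat \<Rightarrow> (nat \<Rightarrow> real) \<Rightarrow> nat list" where
  "discretize n s =
     map (floor_part n s) [0..<num_floor_parts n s] @ replicate (num_unit_parts n s) 1"

lemma floor_part_antimono: "s \<in> Sdown \<Longrightarrow> i \<le> j \<Longrightarrow> floor_part n s j \<le> floor_part n s i"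
  unfolding floor_part_def using SdownD(1)[of s]
  by (auto intro!: nat_mono floor_mono mult_left_mono dest: antimonoD)

lemma floor_part_le: "s \<in> Sdown \<Longrightarrow> real (floor_part n s i) \<le> real n * s i"
  unfolding floor_part_def using SdownD(2)[of s i] by simp

lemma floor_part_gt: "s \<in> Sdown \<Longrightarrow> real n * s i - 1 < real (floor_part n s i)"
  unfolding floor_part_def using SdownD(2)[of s i] by linarith

lemma floor_part_self:
  assumes "s \<in> Sdown"
  shows "floor_part n s n = 0"
proof -
  have "real n * s n < 1"
    using Suc_mult_le_1_Sdown[OF assms, of n] SdownD(2)[OF assms, of n]
    by (cases "s n = 0") (auto simp: algebra_simps)
  then show ?thesis unfolding floor_part_def by linarith
qed

lemma floor_part_pos: "i < num_floor_parts n s \<Longrightarrow> 0 < floor_part n s i"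
  unfolding num_floor_parts_def using not_less_Least by blast

lemma floor_part_eq_0:
  assumes "s \<in> Sdown" "num_floor_parts n s \<le> i"
  shows "floor_part n s i = 0"
proof -
  have "floor_part n s (num_floor_parts n s) = 0"
    unfolding num_floor_parts_def by (rule LeastI[of _ n]) (rule floor_part_self[OF assms(1)])
  then show ?thesis using floor_part_antimono[OF assms] by (metis le_zero_eq)
qed

lemma sum_floor_part_le:
  assumes "s \<in> Sdown"
  shows "(\<Sum>i<m. floor_part n s i) \<le> n"
proof -
  have "real (\<Sum>i<m. floor_part n s i) \<le> (\<Sum>i<m. real n * s i)"
    unfolding of_nat_sum by (intro sum_mono floor_part_le[OF assms])
  also have "\<dots> = real n * (\<Sum>i<m. s i)" by (simp add: sum_distrib_left)
  also have "\<dots> \<le> real n"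
    using SdownD[OF assms] sum_le_suminf[of s "{..<m}"]
    by (intro mult_left_le) auto
  finally show ?thesis by (simp only: of_nat_le_iff)
qed

lemma real_num_unit_parts:
  "s \<in> Sdown \<Longrightarrow>
     real (num_unit_parts n s) = real n - (\<Sum>i<num_floor_parts n s. real (floor_part n s i))"
  unfolding num_unit_parts_def using sum_floor_part_le[where m="num_floor_parts n s" and n=n]
  by (simp add: of_nat_diff)

lemma discretize_in_partitions:
  assumes s: "s \<in> Sdown"
  shows "discretize n s \<in> partitions n"
proof -
  let ?floors = "map (floor_part n s) [0..<num_floor_parts n s]"
  let ?units = "replicate (num_unit_parts n s) (1::nat)"
  have "sorted_wrt (\<ge>) ?floors"
    unfolding sorted_wrt_map
    by (rule sorted_wrt_mono_rel[OF _ sorted_wrt_upt]) (use floor_part_antimono[OF s] in auto)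
  moreover have "sorted_wrt (\<ge>) ?units" by (simp add: sorted_wrt_iff_nth_less)
  moreover have "\<forall>x\<in>set ?floors. 0 < x" using floor_part_pos by auto
  moreover have "sum_list (discretize n s) = n"
    using sum_floor_part_le[OF s]
    by (simp add: discretize_def num_unit_parts_def sum_list_replicate
        sum_set_upt_conv_sum_list_nat[symmetric] atLeast0LessThan)
  ultimately show ?thesis
    unfolding partitions_iff discretize_def by (auto simp: sorted_wrt_append Suc_le_eq)
qed

lemma scaled_discretize:
  assumes "s \<in> Sdown"
  shows "scaled n (discretize n s) i = real (floor_part n s i) / real n +
     (if num_floor_parts n s \<le> i \<and> i < num_floor_parts n s + num_unit_parts n s
      then 1 / real n else 0)"
  using floor_part_eq_0[OF assms, of n i]
  by (cases "i < num_floor_parts n s") (auto simp: scaled_def discretize_def nth_append)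

lemma floor_part_div_ge:
  assumes "s \<in> Sdown" "1 \<le> n"
  shows "s i - 1 / real n \<le> real (floor_part n s i) / real n"
proof -
  have "s i - 1 / real n = (real n * s i - 1) / real n"
    using assms(2) by (simp add: field_simps)
  also have "\<dots> \<le> real (floor_part n s i) / real n"
    using floor_part_gt[OF assms(1), of n i] by (intro divide_right_mono) auto
  finally show ?thesis .
qed

lemma one_minus_discretize_0_le:
  assumes s: "s \<in> Sdown" and n: "1 \<le> n" and le: "1 / real n \<le> 1 - s 0"
  shows "1 - scaled n (discretize n s) 0 \<le> 2 * (1 - s 0)"
proof -
  have "real (floor_part n s 0) / real n \<le> scaled n (discretize n s) 0"
    unfolding scaled_discretize[OF s] by simp
  then show ?thesis using floor_part_div_ge[OF s n, of 0] le by argo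
qed

lemma l1dist_discretize_le:
  assumes s: "s \<in> Sdown" and n: "1 \<le> n" and one: "suminf s = 1"
  shows "l1dist s (scaled n (discretize n s)) \<le> 2 * real (num_unit_parts n s) / real n"
proof -
  let ?k = "num_floor_parts n s" and ?r = "num_unit_parts n s"
  define u where "u i = real (floor_part n s i) / real n" for i
  define v where "v i = (if ?k \<le> i \<and> i < ?k + ?r then 1 / real n else 0)" for i
  have u0: "u i = 0" if "i \<notin> {..<?k}" for i
    using that floor_part_eq_0[OF s] by (simp add: u_def)
  have v0: "v i = 0" if "i \<notin> {?k..<?k + ?r}" for i
    using that by (auto simp: v_def)
  have summable: "summable s" "summable u" "summable v"
    using s summable_finite[of "{..<?k}" u] summable_finite[of "{?k..<?k + ?r}" v] u0 v0
    by (auto simp: Sdown_def)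
  have "suminf u = (\<Sum>i<?k. real (floor_part n s i)) / real n"
    by (subst suminf_finite[of "{..<?k}"]) (use u0 in \<open>auto simp: u_def sum_divide_distrib\<close>)
  moreover have "suminf v = real ?r / real n"
    by (subst suminf_finite[of "{?k..<?k + ?r}"]) (use v0 in \<open>auto simp: v_def\<close>)
  ultimately have sums: "suminf s - suminf u + suminf v = 2 * real ?r / real n"
    using one real_num_unit_parts[OF s, of n] n by (simp add: field_simps)
  have "\<bar>s i - scaled n (discretize n s) i\<bar> \<le> (s i - u i) + v i" for i
  proof -
    have "u i \<le> s i" unfolding u_def using floor_part_le[OF s, of n i] n by (simp add: field_simps)
    moreover have "0 \<le> v i" unfolding v_def by auto
    ultimately show ?thesis
      unfolding scaled_discretize[OF s] u_def[symmetric] v_def[symmetric] by (simp add: abs_if)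
  qed
  then have "l1dist s (scaled n (discretize n s)) \<le> (\<Sum>i. (s i - u i) + v i)"
    unfolding l1dist_def
    by (intro suminf_le summable_abs_diff_Sdown s scaled_in_Sdown discretize_in_partitions n
        summable_add summable_diff summable)
  also have "\<dots> = suminf s - suminf u + suminf v"
    using summable by (simp add: suminf_add[symmetric] suminf_diff summable_diff)
  finally show ?thesis using sums by simp
qed

lemma num_unit_parts_le:
  assumes s: "s \<in> Sdown" and n: "1 \<le> n"
  shows "real (num_unit_parts n s) / real n \<le> 1 - (\<Sum>i<M. s i) + real M / real n"
proof -
  let ?k = "num_floor_parts n s"
  have "(\<Sum>i<M. s i) - real M / real n = (\<Sum>i<M. s i - 1 / real n)"
    by (simp add: sum_subtractf)
  also have "\<dots> \<le> (\<Sum>i<M. real (floor_part n s i)) / real n"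
    unfolding sum_divide_distrib by (intro sum_mono floor_part_div_ge[OF s n])
  also have "(\<Sum>i<M. real (floor_part n s i)) = (\<Sum>i<min M ?k. real (floor_part n s i))"
    using floor_part_eq_0[OF s] by (intro sum.mono_neutral_right) auto
  also have "\<dots> \<le> (\<Sum>i<?k. real (floor_part n s i))"
    by (intro sum_mono2) auto
  finally have "(\<Sum>i<M. s i) - real M / real n \<le> (\<Sum>i<?k. real (floor_part n s i)) / real n"
    using n by (simp add: divide_right_mono)
  then show ?thesis
    using real_num_unit_parts[OF s, of n] n by (simp add: diff_divide_distrib)
qed

lemma tendsto_l1dist_discretize:
  assumes s: "s \<in> Sdown" and one: "suminf s = 1"
  shows "(\<lambda>n. l1dist s (scaled n (discretize n s))) \<longlonglongrightarrow> 0"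
proof (rule LIMSEQ_I)
  fix r :: real assume r: "0 < r"
  have "(\<lambda>M. \<Sum>i<M. s i) \<longlonglongrightarrow> 1"
    using summable_LIMSEQ[of s] s one by (simp add: Sdown_def)
  then obtain M where "norm ((\<Sum>i<M. s i) - 1) < r / 4"
    using LIMSEQ_D[of _ 1 "r / 4"] r by fastforce
  then have M: "1 - (\<Sum>i<M. s i) < r / 4" by (simp only: real_norm_def abs_less_iff) linarith
  obtain N :: nat where N: "4 * real M / r < real N"
    using reals_Archimedean2 by blast
  show "\<exists>N. \<forall>n\<ge>N. norm (l1dist s (scaled n (discretize n s)) - 0) < r"
  proof (intro exI allI impI)
    fix n assume "Suc N \<le> n"
    then have n: "1 \<le> n" and "4 * real M / r < real n" using N by auto
    then have "real M / real n < r / 4" using r by (simp add: field_simps)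
    then have "l1dist s (scaled n (discretize n s)) < r"
      using l1dist_discretize_le[OF s n one] num_unit_parts_le[OF s n, of M] M by argo
    moreover have "0 \<le> l1dist s (scaled n (discretize n s))"
      by (intro l1dist_nonneg s scaled_in_Sdown discretize_in_partitions n)
    ultimately show "norm (l1dist s (scaled n (discretize n s)) - 0) < r" by simp
  qed
qed

lemma tendsto_discretize:
  assumes f: "l1_continuous_Sdown f" and s: "s \<in> Sdown" and one: "suminf s = 1"
  shows "(\<lambda>n. f (scaled n (discretize n s))) \<longlonglongrightarrow> f s"
proof (rule tendsto_l1_continuous[OF f s _ tendsto_l1dist_discretize[OF s one]])
  show "eventually (\<lambda>n. scaled n (discretize n s) \<in> Sdown) sequentially"
    using eventually_ge_at_top[of 1]
    by eventually_elim (intro scaled_in_Sdown discretize_in_partitions s)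
qed

lemma measurable_discretize[measurable]:
  "discretize n \<in> measurable Sdown_borel (count_space UNIV)"
proof -
  define pad where "pad xs = xs @ replicate (n - sum_list xs) (1::nat)" for xs
  have [measurable]: "(\<lambda>s. floor_part n s i) \<in> measurable Sdown_borel (count_space UNIV)" for i
    unfolding floor_part_def by measurable
  have "(\<lambda>s. map (\<lambda>i. floor_part n s i) [0..<k]) \<in> measurable Sdown_borel (count_space UNIV)" for k
    by (rule measurable_map_upt) measurable
  then have "(\<lambda>s. pad (map (\<lambda>i. floor_part n s i) [0..<k])) \<in> measurable Sdown_borel (count_space UNIV)"
    for k by measurable
  then have "(\<lambda>s. pad (map (\<lambda>i. floor_part n s i) [0..<num_floor_parts n s]))
      \<in> measurable Sdown_borel (count_space UNIV)"
    unfolding num_floor_parts_def by (rule measurable_compose_countable) measurable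
  moreover have "pad (map (\<lambda>i. floor_part n s i) [0..<num_floor_parts n s]) = discretize n s" for s
    by (simp add: pad_def discretize_def num_unit_parts_def
        sum_set_upt_conv_sum_list_nat[symmetric] atLeast0LessThan)
  ultimately show ?thesis by simp
qed

section \<open>The approximating distributions\<close>

locale dislocation_approximation =
  fixes \<gamma> :: real and \<nu> :: "(nat \<Rightarrow> real) measure"
  assumes gamma_pos: "0 < \<gamma>" and dislocation: "dislocation_measure \<nu>"
begin

lemma sets_\<nu>: "sets \<nu> = sets Sdown_borel"
  using dislocation by (simp add: dislocation_measure_def)

lemma space_\<nu>[simp]: "space \<nu> = Sdown"
  using sets_eq_imp_space_eq[OF sets_\<nu>] by simp

lemma measurable_\<nu>: "measurable \<nu> N = measurable Sdown_borel N"
  by (rule measurable_cong_sets[OF sets_\<nu> refl])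

lemma AE_one_minus_s0_nonneg: "AE s in \<nu>. 0 \<le> 1 - s 0"
  by (rule AE_I2) (simp add: Sdown_le_1)

lemma integrable_one_minus_s0: "integrable \<nu> (\<lambda>s. 1 - s 0)"
proof (rule integrableI_nonneg)
  show "(\<lambda>s. 1 - s 0) \<in> borel_measurable \<nu>" unfolding measurable_\<nu> by measurable
  show "AE s in \<nu>. 0 \<le> 1 - s 0" by (rule AE_one_minus_s0_nonneg)
  show "(\<integral>\<^sup>+ s. ennreal (1 - s 0) \<partial>\<nu>) < \<infinity>"
    using dislocation by (simp add: dislocation_measure_def)
qed

lemma AE_suminf_eq_1: "AE s in \<nu>. suminf s = 1"
proof (rule AE_I')
  have "{s \<in> space Sdown_borel. suminf s < 1} \<in> sets Sdown_borel" by measurable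
  then show "{s \<in> Sdown. suminf s < 1} \<in> null_sets \<nu>"
    using dislocation by (simp add: dislocation_measure_def null_sets_def sets_\<nu>)
  show "{s \<in> space \<nu>. suminf s \<noteq> 1} \<subseteq> {s \<in> Sdown. suminf s < 1}"
    using SdownD(4) by force
qed

definition mass :: real where
  "mass = (\<integral>s. 1 - s 0 \<partial>\<nu>)"

lemma mass_nonneg: "0 \<le> mass"
  unfolding mass_def by (intro Bochner_Integration.integral_nonneg) (simp add: Sdown_le_1)

definition threshold :: "nat \<Rightarrow> real" where
  "threshold n = 1 / real n + 2 * (mass + 1) * real n powr - \<gamma>"

definition above_threshold :: "nat \<Rightarrow> (nat \<Rightarrow> real) set" where
  "above_threshold n = {s \<in> Sdown. threshold n \<le> 1 - s 0}"

lemma above_threshold_sets: "above_threshold n \<in> sets \<nu>"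
proof -
  have "{s \<in> space Sdown_borel. threshold n \<le> 1 - s 0} \<in> sets Sdown_borel" by measurable
  then show ?thesis by (simp add: above_threshold_def sets_\<nu>)
qed

lemma threshold_pos: "1 \<le> n \<Longrightarrow> 0 < threshold n"
  unfolding threshold_def using mass_nonneg
  by (intro add_pos_nonneg) auto

lemma inverse_le_threshold: "1 / real n \<le> threshold n"
  unfolding threshold_def using mass_nonneg by simp

lemma threshold_tendsto_0: "threshold \<longlonglongrightarrow> 0"
proof -
  have powr: "(\<lambda>n. real n powr - \<gamma>) \<longlonglongrightarrow> 0"
    by (rule tendsto_neg_powr) (use gamma_pos filterlim_real_sequentially in auto)
  from tendsto_add[OF lim_const_over_n tendsto_mult_right_zero[OF powr]]
  show ?thesis unfolding threshold_def[abs_def] by simp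
qed

lemma emeasure_above_threshold_finite:
  assumes n: "1 \<le> n"
  shows "emeasure \<nu> (above_threshold n) < \<infinity>"
proof -
  have "emeasure \<nu> (above_threshold n) \<le> ennreal (1 / threshold n * mass)"
    using integral_Markov_inequality[OF integrable_one_minus_s0 AE_one_minus_s0_nonneg
        threshold_pos[OF n]]
    by (simp add: above_threshold_def mass_def)
  then show ?thesis by (rule le_less_trans) simp
qed

lemma measure_above_threshold_le:
  assumes n: "1 \<le> n"
  shows "real n powr - \<gamma> * measure \<nu> (above_threshold n) \<le> 1 / 2"
proof -
  let ?a = "real n powr - \<gamma>" and ?m = "measure \<nu> (above_threshold n)"
  have "?m \<le> mass / threshold n"
    using integral_Markov_inequality_measure[OF integrable_one_minus_s0 above_threshold_sets
        AE_one_minus_s0_nonneg threshold_pos[OF n]]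
    by (simp add: above_threshold_def mass_def)
  then have markov: "threshold n * ?m \<le> mass"
    using threshold_pos[OF n] by (simp add: field_simps)
  have "(mass + 1) * (2 * (?a * ?m)) = 2 * (mass + 1) * ?a * ?m"
    by (simp add: mult_ac)
  also have "\<dots> \<le> threshold n * ?m"
    by (rule mult_right_mono) (simp_all add: threshold_def)
  also have "\<dots> \<le> (mass + 1) * 1"
    using markov by simp
  finally show ?thesis
    using mass_nonneg by (simp add: mult_le_cancel_left_pos)
qed

definition weight :: "nat \<Rightarrow> nat list \<Rightarrow> real" where
  "weight n l = measure \<nu> {s \<in> above_threshold n. discretize n s = l}"

lemma integral_above_threshold_discretize:
  assumes "1 \<le> n"
  shows "(\<integral>s. indicator (above_threshold n) s * h (discretize n s) \<partial>\<nu>) =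
         (\<Sum>l\<in>partitions n. weight n l * h l)"
  unfolding weight_def
  by (rule integral_indicator_finite_range)
     (use assms emeasure_above_threshold_finite in
      \<open>auto simp: measurable_\<nu> finite_partitions discretize_in_partitions above_threshold_sets\<close>)

lemma sum_weight:
  assumes "1 \<le> n"
  shows "(\<Sum>l\<in>partitions n. weight n l) = measure \<nu> (above_threshold n)"
  using integral_above_threshold_discretize[OF assms, of "\<lambda>_. 1"] above_threshold_sets[of n]
  by (simp add: above_threshold_def Int_absorb2)

text \<open>For \<open>n = 1\<close> the partition into singletons is \<open>(n)\<close> itself; the convention
  \<open>\<emptyset> \<in> P\<^sub>1\<close> provides the required second partition.\<close>
definition singletons :: "nat \<Rightarrow> nat list" where
  "singletons n = (if n = 1 then [] else replicate n 1)"

lemma singletons_in_partitions: "1 \<le> n \<Longrightarrow> singletons n \<in> partitions n"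
  unfolding partitions_iff singletons_def
  by (auto simp: sorted_wrt_iff_nth_less sum_list_replicate)

lemma singletons_ne_single: "1 \<le> n \<Longrightarrow> singletons n \<noteq> [n]"
  unfolding singletons_def by (cases n) auto

definition singletons_weight :: "nat \<Rightarrow> real" where
  "singletons_weight n = 1 / (2 * real n * real n powr \<gamma>)"

lemma singletons_weight_bounds:
  assumes "1 \<le> n"
  shows "0 < singletons_weight n" "singletons_weight n \<le> 1 / 2"
proof -
  have "1 \<le> real n powr \<gamma>"
    using assms gamma_pos by (intro ge_one_powr_ge_zero) auto
  then have "1 * 1 \<le> real n * real n powr \<gamma>"
    using assms by (intro mult_mono) auto
  then show "0 < singletons_weight n" "singletons_weight n \<le> 1 / 2"
    unfolding singletons_weight_def by (auto simp: field_simps)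
qed

definition q_density :: "nat \<Rightarrow> nat list \<Rightarrow> real" where
  "q_density n l =
     (if l \<in> partitions n then
        real n powr - \<gamma> * weight n l
        + (if l = singletons n then singletons_weight n else 0)
        + (if l = [n]
           then 1 - real n powr - \<gamma> * measure \<nu> (above_threshold n) - singletons_weight n
           else 0)
      else 0)"

definition q :: "nat \<Rightarrow> nat list pmf" where
  "q n = embed_pmf (q_density n)"

lemma q_density_nonneg: "1 \<le> n \<Longrightarrow> 0 \<le> q_density n l"
  using measure_above_threshold_le[of n] singletons_weight_bounds[of n]
  unfolding q_density_def weight_def by auto

lemma sum_q_density:
  assumes n: "1 \<le> n"
  shows "(\<Sum>l\<in>partitions n. q_density n l) = 1"
proof -
  have "(\<Sum>l\<in>partitions n. q_density n l) =
        real n powr - \<gamma> * (\<Sum>l\<in>partitions n. weight n l) + singletons_weight n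
        + (1 - real n powr - \<gamma> * measure \<nu> (above_threshold n) - singletons_weight n)"
    using singletons_in_partitions[OF n] single_in_partitions[OF n] finite_partitions[of n]
    by (simp add: q_density_def sum.distrib sum_distrib_left)
  then show ?thesis using sum_weight[OF n] by simp
qed

lemma nn_integral_q_density:
  assumes n: "1 \<le> n"
  shows "(\<integral>\<^sup>+ l. ennreal (q_density n l) \<partial>count_space UNIV) = 1"
proof -
  have "(\<integral>\<^sup>+ l. ennreal (q_density n l) \<partial>count_space UNIV) =
        (\<Sum>l\<in>partitions n. ennreal (q_density n l))"
    by (rule nn_integral_count_space'[OF finite_partitions]) (auto simp: q_density_def)
  also have "\<dots> = 1"
    using q_density_nonneg[OF n] sum_q_density[OF n] by (subst sum_ennreal) auto
  finally show ?thesis .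
qed

lemma pmf_q: "1 \<le> n \<Longrightarrow> pmf (q n) l = q_density n l"
  unfolding q_def by (rule pmf_embed_pmf) (use q_density_nonneg nn_integral_q_density in auto)

lemma set_pmf_q: "1 \<le> n \<Longrightarrow> set_pmf (q n) \<subseteq> partitions n"
  unfolding q_def using q_density_nonneg nn_integral_q_density
  by (subst set_embed_pmf) (auto simp: q_density_def)

lemma pmf_q_single_lt_1:
  assumes n: "1 \<le> n"
  shows "pmf (q n) [n] < 1"
proof -
  have "weight n [n] \<le> (\<Sum>l\<in>partitions n. weight n l)"
    by (rule member_le_sum) (auto simp: single_in_partitions[OF n] finite_partitions weight_def)
  then have "real n powr - \<gamma> * weight n [n] \<le> real n powr - \<gamma> * measure \<nu> (above_threshold n)"
    using sum_weight[OF n] by (simp add: mult_left_mono)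
  then show ?thesis
    using single_in_partitions[OF n] singletons_ne_single[OF n] singletons_weight_bounds[OF n]
    by (simp add: pmf_q[OF n] q_density_def)
qed

lemma powr_qbar_q:
  assumes n: "1 \<le> n" and g: "g (scaled n [n]) = 0"
  shows "real n powr \<gamma> * qbar n (q n) g =
    (\<integral>s. indicator (above_threshold n) s * g (scaled n (discretize n s)) \<partial>\<nu>)
    + g (scaled n (singletons n)) / (2 * real n)"
proof -
  have "qbar n (q n) g =
        (\<Sum>l\<in>partitions n. real n powr - \<gamma> * (weight n l * g (scaled n l))
          + (if l = singletons n then singletons_weight n * g (scaled n l) else 0))"
    unfolding qbar_def pmf_q[OF n] q_density_def
    by (rule sum.cong[OF refl]) (auto simp: g algebra_simps)
  also have "\<dots> = real n powr - \<gamma> *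
      (\<integral>s. indicator (above_threshold n) s * g (scaled n (discretize n s)) \<partial>\<nu>)
      + singletons_weight n * g (scaled n (singletons n))"
    using singletons_in_partitions[OF n] finite_partitions[of n]
      integral_above_threshold_discretize[OF n, of "\<lambda>l. g (scaled n l)"]
    by (simp add: sum.distrib sum_distrib_left)
  finally show ?thesis
    using n by (simp add: singletons_weight_def field_simps powr_minus)
qed

lemma tendsto_indicator_above_threshold:
  assumes g_lim: "(\<lambda>n. g (scaled n (discretize n s))) \<longlonglongrightarrow> g s"
    and g_le: "\<bar>g s\<bar> \<le> B * (1 - s 0)"
    and s: "s \<in> Sdown"
  shows "(\<lambda>n. indicator (above_threshold n) s * g (scaled n (discretize n s))) \<longlonglongrightarrow> g s"
proof (cases "s 0 = 1")
  case True
  have "eventually (\<lambda>n. indicator (above_threshold n) s * g (scaled n (discretize n s)) = 0)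
      sequentially"
    using eventually_ge_at_top[of 1]
  proof eventually_elim
    case (elim n)
    then have "s \<notin> above_threshold n"
      using threshold_pos[OF elim] True by (simp add: above_threshold_def)
    then show ?case by simp
  qed
  then show ?thesis
    using True g_le by (simp add: tendsto_eventually)
next
  case False
  then have "0 < 1 - s 0" using Sdown_le_1[OF s, of 0] by simp
  with threshold_tendsto_0 have "eventually (\<lambda>n. threshold n < 1 - s 0) sequentially"
    by (rule order_tendstoD)
  then have "eventually (\<lambda>n. g (scaled n (discretize n s)) =
      indicator (above_threshold n) s * g (scaled n (discretize n s))) sequentially"
    by eventually_elim (simp add: above_threshold_def s)
  with g_lim show ?thesis by (rule Lim_transform_eventually)
qed

lemma abs_indicator_above_threshold_le:
  assumes g_le: "\<And>t. t \<in> Sdown \<Longrightarrow> \<bar>g t\<bar> \<le> B * (1 - t 0)" and B: "0 \<le> B"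
    and s: "s \<in> Sdown" and n: "1 \<le> n"
  shows "\<bar>indicator (above_threshold n) s * g (scaled n (discretize n s))\<bar> \<le> 2 * B * (1 - s 0)"
proof (cases "s \<in> above_threshold n")
  case True
  let ?t = "scaled n (discretize n s)"
  have "1 / real n \<le> 1 - s 0"
    using True inverse_le_threshold[of n] by (simp add: above_threshold_def)
  then have "1 - ?t 0 \<le> 2 * (1 - s 0)"
    by (rule one_minus_discretize_0_le[OF s n])
  moreover have "\<bar>g ?t\<bar> \<le> B * (1 - ?t 0)"
    by (intro g_le scaled_in_Sdown discretize_in_partitions s n)
  ultimately have "\<bar>g ?t\<bar> \<le> B * (2 * (1 - s 0))"
    using B by (meson order_trans mult_left_mono)
  then show ?thesis using True by (simp add: mult_ac)
next
  case False
  then show ?thesis using B Sdown_le_1[OF s, of 0] by simp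
qed

lemma tendsto_integral_above_threshold:
  assumes g_meas: "g \<in> borel_measurable Sdown_borel"
    and g_lim: "\<And>s. s \<in> Sdown \<Longrightarrow> suminf s = 1 \<Longrightarrow>
                  (\<lambda>n. g (scaled n (discretize n s))) \<longlonglongrightarrow> g s"
    and g_le: "\<And>s. s \<in> Sdown \<Longrightarrow> \<bar>g s\<bar> \<le> B * (1 - s 0)" and B: "0 \<le> B"
  shows "(\<lambda>n. \<integral>s. indicator (above_threshold n) s * g (scaled n (discretize n s)) \<partial>\<nu>)
           \<longlonglongrightarrow> (\<integral>s. g s \<partial>\<nu>)"
proof -
  let ?S = "\<lambda>n s. indicator (above_threshold n) s * g (scaled n (discretize n s))"
  have "(\<lambda>n. \<integral>s. ?S (Suc n) s \<partial>\<nu>) \<longlonglongrightarrow> (\<integral>s. g s \<partial>\<nu>)"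
  proof (rule integral_dominated_convergence[where w="\<lambda>s. 2 * B * (1 - s 0)"])
    show "g \<in> borel_measurable \<nu>" using g_meas by (simp add: measurable_\<nu>)
    show "?S (Suc n) \<in> borel_measurable \<nu>" for n
    proof -
      have "(\<lambda>s. g (scaled (Suc n) (discretize (Suc n) s))) \<in> borel_measurable \<nu>"
        using measurable_comp[OF measurable_discretize, of "\<lambda>l. g (scaled (Suc n) l)" borel]
        by (simp add: measurable_\<nu> comp_def)
      then show ?thesis using above_threshold_sets by measurable
    qed
    show "integrable \<nu> (\<lambda>s. 2 * B * (1 - s 0))"
      by (intro integrable_mult_right integrable_one_minus_s0)
    show "AE s in \<nu>. (\<lambda>n. ?S (Suc n) s) \<longlonglongrightarrow> g s"
      using AE_suminf_eq_1
      by (rule AE_mp) (auto intro!: AE_I2 LIMSEQ_Suc tendsto_indicator_above_threshold g_lim g_le)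
    show "AE s in \<nu>. norm (?S (Suc n) s) \<le> 2 * B * (1 - s 0)" for n
      by (rule AE_I2) (simp add: abs_indicator_above_threshold_le[of g B, OF g_le B])
  qed
  then show ?thesis by (rule LIMSEQ_imp_Suc)
qed

lemma tendsto_powr_qbar:
  assumes "bounded_Sdown f" and f: "l1_continuous_Sdown f"
  shows "(\<lambda>n. real n powr \<gamma> * qbar n (q n) (\<lambda>s. (1 - s 0) * f s))
           \<longlonglongrightarrow> (\<integral>s. (1 - s 0) * f s \<partial>\<nu>)"
proof -
  obtain B where B: "\<And>s. s \<in> Sdown \<Longrightarrow> \<bar>f s\<bar> \<le> B" "0 \<le> B"
    using assms(1) unfolding bounded_Sdown_def
    by (meson abs_ge_zero order_trans max.cobounded1 max.cobounded2)
  define g where "g s = (1 - s 0) * f s" for s :: "nat \<Rightarrow> real"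
  have g_le: "\<bar>g s\<bar> \<le> B * (1 - s 0)" if s: "s \<in> Sdown" for s
  proof -
    have "\<bar>f s\<bar> * (1 - s 0) \<le> B * (1 - s 0)"
      using B(1)[OF s] Sdown_le_1[OF s, of 0] by (intro mult_right_mono) auto
    then show ?thesis
      using Sdown_le_1[OF s, of 0] by (simp add: g_def abs_mult mult.commute)
  qed
  have g_lim: "(\<lambda>n. g (scaled n (discretize n s))) \<longlonglongrightarrow> g s"
    if "s \<in> Sdown" "suminf s = 1" for s
    unfolding g_def
    using tendsto_discretize[OF l1_continuous_coordinate that] tendsto_discretize[OF f that]
    by (intro tendsto_intros)
  have g_meas: "g \<in> borel_measurable Sdown_borel"
    unfolding g_def using measurable_l1_continuous[OF f] by measurable
  have error: "(\<lambda>n. g (scaled n (singletons n)) / (2 * real n)) \<longlonglongrightarrow> 0"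
  proof (rule Lim_null_comparison[OF _ tendsto_mult_right_zero[OF lim_const_over_n]])
    show "eventually (\<lambda>n. norm (g (scaled n (singletons n)) / (2 * real n)) \<le> B * (1 / real n))
        sequentially"
      using eventually_ge_at_top[of 1]
    proof eventually_elim
      case (elim n)
      let ?t = "scaled n (singletons n)"
      have t: "?t \<in> Sdown"
        using elim by (intro scaled_in_Sdown singletons_in_partitions)
      have "\<bar>g ?t\<bar> \<le> B * (1 - ?t 0)" by (rule g_le[OF t])
      also have "\<dots> \<le> B"
        using SdownD(2)[OF t, of 0] Sdown_le_1[OF t, of 0] B(2) by (intro mult_left_le) auto
      finally show ?case using elim B(2) by (simp add: abs_divide field_simps)
    qed
  qed
  have "eventually (\<lambda>n. (\<integral>s. indicator (above_threshold n) s * g (scaled n (discretize n s)) \<partial>\<nu>)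
      + g (scaled n (singletons n)) / (2 * real n) = real n powr \<gamma> * qbar n (q n) g) sequentially"
    using eventually_ge_at_top[of 1]
    by eventually_elim (simp add: powr_qbar_q g_def scaled_def)
  with tendsto_add[OF tendsto_integral_above_threshold[OF g_meas g_lim g_le B(2)] error]
  show ?thesis unfolding g_def by (simp add: Lim_transform_eventually)
qed

end

theorem proposition4:
  fixes \<gamma> :: real and \<nu> :: "(nat \<Rightarrow> real) measure"
  assumes "\<gamma> > 0" and "dislocation_measure \<nu>"
  shows "\<exists>q :: nat \<Rightarrow> nat list pmf.
           (\<forall>n\<ge>1. set_pmf (q n) \<subseteq> partitions n \<and> pmf (q n) [n] < 1) \<and>
           (\<forall>f. bounded_Sdown f \<and> l1_continuous_Sdown f \<longrightarrow>
              (\<lambda>n. real n powr \<gamma> * qbar n (q n) (\<lambda>s. (1 - s 0) * f s))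
                \<longlonglongrightarrow> (\<integral>s. (1 - s 0) * f s \<partial>\<nu>))"
proof -
  interpret dislocation_approximation \<gamma> \<nu>
    using assms by unfold_locales
  show ?thesis
    using set_pmf_q pmf_q_single_lt_1 tendsto_powr_qbar by blast
qed

end
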